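(* Let $D$ be a CAEXT derivation ending in a configuration $C\neq\mathsf{unsat}$. Then in $C$, for all array terms $a$ and constant array terms $\langle v\rangle$: (i) if $C$ is obtained by applying a non-conflict rule to a configuration $C'$ and $I(a,\langle v\rangle)\neq()$ in $C'$, then both $I(a,\langle v\rangle)$ and its depth $|I(a,\langle v\rangle)|$ are the same in $C$ as in $C'$; (ii) $I(a,\langle v\rangle)$ is well defined (its defining recursion terminates); (iii) $|I(a,\langle v\rangle)|$ is finite; (iv) $I(a,\langle v\rangle)=()$ if and only if $\pi(a,\langle v\rangle)=()$.
   Context: Theory. Many-sorted first-order logic with equality. There is an index sort $\sigma$, an element sort $\tau$, and an array sort $(\sigma\to\tau)$, with function symbols: read $a[i]$, write $a\langle i\triangleleft u\rangle$, and constant array $\langle v\rangle$. The empty theory treats all these symbols (and the array sort) as uninterpreted. $T(A)$ is the set of terms occurring in $A$, $T_{\mathcal A}(A)$ the set of array terms in $A$, and $W(A)=\{a\langle i\triangleleft u\rangle[i]\approx u \mid a\langle i\triangleleft u\rangle\in T(A)\}$. Configurations. A configuration is either $\mathsf{unsat}$ or a triple $\langle A,\mathcal I,\pi\rangle$ where $A$ is a set of formulas (with flat literals), $\mathcal I$ is either $\mathcal I_0=\mathsf{none}$ or an interpretation in the empty theory satisfying $A$, and $\pi$ maps pairs $(a,t)$ ($a$ an array term, $t$ a read term $b[i]$ or a constant array term $\langle v\rangle$) to either the undefined value $()$ or a pair $(r,c)$ with $r$ a formula and $c$ an array term. $\pi_0$ maps every pair to $()$; the initial configuration for $A$ is $\langle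 A,\mathcal I_0,\pi_0\rangle$. Reasons. $\mathcal R(a,t)=()$ if $\pi(a,t)=()$; otherwise $\mathcal R(a,t)=\top$ if $t=a$ or $t=a[i]$ for some $i$; otherwise $\mathcal R(a,t)=\mathcal R(c,t)\wedge r$ where $\pi(a,t)=(r,c)$. Updated indices and depth: $I(a,\langle v\rangle)=()$ and $|I(a,\langle v\rangle)|=0$ if $\pi(a,\langle v\rangle)=()$; $I(a,\langle v\rangle)=\emptyset$ and $|I(a,\langle v\rangle)|=1$ if $a=\langle v\rangle$; $I(a,\langle v\rangle)=I(b,\langle v\rangle)\cup\{j\}$ and $|I(a,\langle v\rangle)|=1+|I(b,\langle v\rangle)|$ if $\pi(a,\langle v\rangle)=(\top,b)$ with $b=a\langle j\triangleleft u\rangle$ or $a=b\langle j\triangleleft u\rangle$ for some $u$; otherwise $I(a,\langle v\rangle)=I(c,\langle v\rangle)$ and $|I(a,\langle v\rangle)|=1+|I(c,\langle v\rangle)|$ where $\pi(a,\langle v\rangle)=(r,c)$. "$\mathcal I\models\varphi$" refers to the current $\mathcal I$ (empty theory); such premises require $\mathcal I\ne\mathcal I_0$. "Reset" means $(\mathcal I,\pi):=(\mathcal I_0,\pi_0)$. Rules of CAEXT: Interp: if $\mathcal I=\mathcal I_0$ and $\mathcal I'\models A\cup W(A)$ in the empty theory, set $\mathcal I:=\mathcal I'$. Conf: if $A\cup W(A)$ is empty-theory unsatisfiable, derive $\mathsf{unsat}$. InitR: $a[i]\in T(A)$ ⟹ $\pi(a,a[i]):=(\top,a)$. InitW: $s=a\langle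 i\triangleleft u\rangle\in T(A)$ ⟹ $\pi(s,s[i]):=(\top,s)$. RowD: $\mathcal I\models i\not\approx j$, $\pi(a\langle j\triangleleft u\rangle,b[i])\ne()$, $\pi(a,b[i])=()$ ⟹ $\pi(a,b[i]):=(i\not\approx j,a\langle j\triangleleft u\rangle)$. RowU: $\mathcal I\models i\not\approx j$, $a\langle j\triangleleft u\rangle\in T(A)$, $\pi(a,b[i])\ne()$, $\pi(a\langle j\triangleleft u\rangle,b[i])=()$ ⟹ $\pi(a\langle j\triangleleft u\rangle,b[i]):=(i\not\approx j,a)$. EqR: $\mathcal I\models a\approx c$, $a,c\in T_{\mathcal A}(A)$, $a\approx c\in T(A)$, $\pi(a,b[i])\ne()$, $\pi(c,b[i])=()$ ⟹ $\pi(c,b[i]):=(a\approx c,a)$. EqL: symmetric, $\pi(a,b[i]):=(a\approx c,c)$. CongR: $\mathcal I\models i\approx k$, $\pi(a,b[i])\ne()$, $\pi(a,c[k])\ne()$, $\mathcal I\models b[i]\not\approx c[k]$ ⟹ add $\mathcal R(a,b[i])\wedge\mathcal R(a,c[k])\wedge i\approx k\Rightarrow b[i]\approx c[k]$ to $A$, reset. DisEq: $\mathcal I\models a\not\approx c$, $a,c\in T_{\mathcal A}(A)$, $a\approx c\in T(A)$, $k_{\{a,c\}}\notin T(A)$ ⟹ add $a\not\approx c\Rightarrow a[k_{\{a,c\}}]\not\approx c[k_{\{a,c\}}]$ (fresh index constant $k_{\{a,c\}}$), reset. Roc: $\pi(\langle v\rangle,b[i])\ne()$, $\mathcal I\models b[i]\not\approx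 v$ ⟹ add $\mathcal R(\langle v\rangle,b[i])\Rightarrow b[i]\approx v$, reset. InitC: $\langle v\rangle\in T(A)$ ⟹ $\pi(\langle v\rangle,\langle v\rangle):=(\top,\langle v\rangle)$. CowD: $\pi(a\langle j\triangleleft u\rangle,\langle v\rangle)\ne()$, $\pi(a,\langle v\rangle)=()$, $\mathcal I\models\exists i{:}\sigma.\bigwedge_{k\in I(a\langle j\triangleleft u\rangle,\langle v\rangle)\cup\{j\}}i\not\approx k$ ⟹ $\pi(a,\langle v\rangle):=(\top,a\langle j\triangleleft u\rangle)$. CowU: $\pi(a,\langle v\rangle)\ne()$, $\pi(a\langle j\triangleleft u\rangle,\langle v\rangle)=()$, $a\langle j\triangleleft u\rangle\in T(A)$, $\mathcal I\models\exists i{:}\sigma.\bigwedge_{k\in I(a,\langle v\rangle)\cup\{j\}}i\not\approx k$ ⟹ $\pi(a\langle j\triangleleft u\rangle,\langle v\rangle):=(\top,a)$. CEqR: $\mathcal I\models a\approx c$, $a,c\in T_{\mathcal A}(A)$, $a\approx c\in T(A)$, $\pi(a,\langle v\rangle)\ne()$, $\pi(c,\langle v\rangle)=()$ ⟹ $\pi(c,\langle v\rangle):=(a\approx c,a)$. CEqL: symmetric, $\pi(a,\langle v\rangle):=(a\approx c,c)$. CongC: $\pi(a,\langle v\rangle)\ne()$, $\pi(a,\langle w\rangle)\ne()$, $\mathcal I\models v\not\approx w$, $\mathcal I\models\exists i{:}\sigma.\bigwedge_{k\in I(a,\langle v\rangle)\cup I(a,\langle w\rangle)}i\not\approx k$ ⟹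 add $\mathcal R(a,\langle v\rangle)\wedge\mathcal R(a,\langle w\rangle)\wedge\exists i{:}\sigma.\bigwedge_{k\in I(a,\langle v\rangle)\cup I(a,\langle w\rangle)}i\not\approx k\Rightarrow v\approx w$, reset. Conflict rules: CongR, DisEq, Roc, CongC; all other rules are non-conflict rules. A derivation is a sequence of configurations starting from an initial configuration, each obtained from the previous by a rule application. *)

theory Defs
  imports Main "HOL-Library.FSet"
begin

datatype srt = Idx | Elm | Arr

text \<open>V: (bound) variables; Fn: uninterpreted function symbols (constants have no
  arguments), identified by name, result sort and argument sorts; Rd a i: read a[i];
  Wr a i u: write a<i <| u>; CA v: constant array <v>; K S: the fresh index constant
  k_S reserved for the pair S = {a,c} (used by DisEq).\<close>
datatype trm =
    V string srt
  | Fn string srt "trm list"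
  | Rd trm trm
  | Wr trm trm trm
  | CA trm
  | K "trm fset"

fun srt_of :: "trm \<Rightarrow> srt" where
  "srt_of (V x s) = s"
| "srt_of (Fn f s ts) = s"
| "srt_of (Rd a i) = Elm"
| "srt_of (Wr a i u) = Arr"
| "srt_of (CA v) = Arr"
| "srt_of (K S) = Idx"

lemma size_fset_mem_less:
  "x |\<in>| S \<Longrightarrow> size x < Suc (\<Sum>y\<in>fset S. Suc (size y))"
proof -
  assume "x |\<in>| S"
  then have "Suc (size x) \<le> (\<Sum>y\<in>fset S. Suc (size y))"
    by (intro member_le_sum) auto
  then show ?thesis by simp
qed

lemma size_list_mem_less:
  "x \<in> set ts \<Longrightarrow> size x < Suc (size_list size ts)"
  by (induction ts) auto

function (sequential) ws :: "trm \<Rightarrow> bool" where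
  "ws (V x s) = True"
| "ws (Fn f s ts) = (\<forall>t\<in>set ts. ws t)"
| "ws (Rd a i) = (ws a \<and> ws i \<and> srt_of a = Arr \<and> srt_of i = Idx)"
| "ws (Wr a i u) = (ws a \<and> ws i \<and> ws u \<and> srt_of a = Arr \<and> srt_of i = Idx \<and> srt_of u = Elm)"
| "ws (CA v) = (ws v \<and> srt_of v = Elm)"
| "ws (K S) = (\<forall>t\<in>fset S. ws t \<and> srt_of t = Arr)"
  by pat_completeness auto
termination
  by (relation "measure size") (auto simp: size_fset_mem_less size_list_mem_less)

text \<open>Variables occurring in a term (the index constant K S is a constant symbol, so its
  index set does not contribute subterms or variables).\<close>
fun tvars :: "trm \<Rightarrow> (string \<times> srt) set" where
  "tvars (V x s) = {(x, s)}"
| "tvars (Fn f s ts) = (\<Union>t\<in>set ts. tvars t)"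
| "tvars (Rd a i) = tvars a \<union> tvars i"
| "tvars (Wr a i u) = tvars a \<union> tvars i \<union> tvars u"
| "tvars (CA v) = tvars v"
| "tvars (K S) = {}"

definition ground :: "trm \<Rightarrow> bool" where
  "ground t \<longleftrightarrow> tvars t = {}"

fun subterms :: "trm \<Rightarrow> trm set" where
  "subterms (V x s) = {V x s}"
| "subterms (Fn f s ts) = insert (Fn f s ts) (\<Union>t\<in>set ts. subterms t)"
| "subterms (Rd a i) = insert (Rd a i) (subterms a \<union> subterms i)"
| "subterms (Wr a i u) = insert (Wr a i u) (subterms a \<union> subterms i \<union> subterms u)"
| "subterms (CA v) = insert (CA v) (subterms v)"
| "subterms (K S) = {K S}"

datatype fml =
    Tt
  | Ff
  | Eq trm trm
  | Not fml
  | And fml fml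
  | Or fml fml
  | Imp fml fml
  | Ex string srt fml
  | All string srt fml

fun fterms :: "fml \<Rightarrow> trm set" where
  "fterms Tt = {}"
| "fterms Ff = {}"
| "fterms (Eq s t) = subterms s \<union> subterms t"
| "fterms (Not p) = fterms p"
| "fterms (And p q) = fterms p \<union> fterms q"
| "fterms (Or p q) = fterms p \<union> fterms q"
| "fterms (Imp p q) = fterms p \<union> fterms q"
| "fterms (Ex x s p) = fterms p"
| "fterms (All x s p) = fterms p"

fun fatoms :: "fml \<Rightarrow> (trm \<times> trm) set" where
  "fatoms Tt = {}"
| "fatoms Ff = {}"
| "fatoms (Eq s t) = {(s, t)}"
| "fatoms (Not p) = fatoms p"
| "fatoms (And p q) = fatoms p \<union> fatoms q"
| "fatoms (Or p q) = fatoms p \<union> fatoms q"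
| "fatoms (Imp p q) = fatoms p \<union> fatoms q"
| "fatoms (Ex x s p) = fatoms p"
| "fatoms (All x s p) = fatoms p"

fun fvars :: "fml \<Rightarrow> (string \<times> srt) set" where
  "fvars Tt = {}"
| "fvars Ff = {}"
| "fvars (Eq s t) = tvars s \<union> tvars t"
| "fvars (Not p) = fvars p"
| "fvars (And p q) = fvars p \<union> fvars q"
| "fvars (Or p q) = fvars p \<union> fvars q"
| "fvars (Imp p q) = fvars p \<union> fvars q"
| "fvars (Ex x s p) = fvars p - {(x, s)}"
| "fvars (All x s p) = fvars p - {(x, s)}"

fun wsf :: "fml \<Rightarrow> bool" where
  "wsf Tt = True"
| "wsf Ff = True"
| "wsf (Eq s t) = (ws s \<and> ws t \<and> srt_of s = srt_of t)"
| "wsf (Not p) = wsf p"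
| "wsf (And p q) = (wsf p \<and> wsf q)"
| "wsf (Or p q) = (wsf p \<and> wsf q)"
| "wsf (Imp p q) = (wsf p \<and> wsf q)"
| "wsf (Ex x s p) = wsf p"
| "wsf (All x s p) = wsf p"

fun constlike :: "trm \<Rightarrow> bool" where
  "constlike (V x s) = True"
| "constlike (Fn f s ts) = (ts = [])"
| "constlike (K S) = True"
| "constlike _ = False"

fun args :: "trm \<Rightarrow> trm list" where
  "args (V x s) = []"
| "args (Fn f s ts) = ts"
| "args (Rd a i) = [a, i]"
| "args (Wr a i u) = [a, i, u]"
| "args (CA v) = [v]"
| "args (K S) = []"

definition flat_term :: "trm \<Rightarrow> bool" where
  "flat_term t \<longleftrightarrow> (\<forall>s\<in>set (args t). constlike s)"

definition flat_atom :: "trm \<times> trm \<Rightarrow> bool" where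
  "flat_atom st \<longleftrightarrow> (constlike (fst st) \<and> flat_term (snd st)) \<or> (constlike (snd st) \<and> flat_term (fst st))"

definition input_formula :: "fml \<Rightarrow> bool" where
  "input_formula \<phi> \<longleftrightarrow> wsf \<phi> \<and> fvars \<phi> = {} \<and> (\<forall>at\<in>fatoms \<phi>. flat_atom at)"

section \<open>Semantics in the empty theory\<close>

text \<open>Interpretations in the empty theory: every symbol (including read, write and
  constant array, and the array sort) is uninterpreted. Carriers are subsets of nat, one per
  sort; by Loewenheim-Skolem this loses no generality for (un)satisfiability of sets of
  formulas over this countable language.\<close>
record interp =
  dom :: "srt \<Rightarrow> nat set"
  fn  :: "string \<Rightarrow> srt \<Rightarrow> srt list \<Rightarrow> nat list \<Rightarrow> nat"
  rd  :: "nat \<Rightarrow> nat \<Rightarrow> nat"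
  wr  :: "nat \<Rightarrow> nat \<Rightarrow> nat \<Rightarrow> nat"
  ca  :: "nat \<Rightarrow> nat"
  kc  :: "trm fset \<Rightarrow> nat"

definition is_interp :: "interp \<Rightarrow> bool" where
  "is_interp I \<longleftrightarrow>
     (\<forall>s. dom I s \<noteq> {}) \<and>
     (\<forall>f s ss ds. list_all2 (\<lambda>d s'. d \<in> dom I s') ds ss \<longrightarrow> fn I f s ss ds \<in> dom I s) \<and>
     (\<forall>a i. a \<in> dom I Arr \<longrightarrow> i \<in> dom I Idx \<longrightarrow> rd I a i \<in> dom I Elm) \<and>
     (\<forall>a i u. a \<in> dom I Arr \<longrightarrow> i \<in> dom I Idx \<longrightarrow> u \<in> dom I Elm \<longrightarrow> wr I a i u \<in> dom I Arr) \<and>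
     (\<forall>v. v \<in> dom I Elm \<longrightarrow> ca I v \<in> dom I Arr) \<and>
     (\<forall>S. kc I S \<in> dom I Idx)"

type_synonym env = "string \<Rightarrow> srt \<Rightarrow> nat"

fun eval :: "interp \<Rightarrow> env \<Rightarrow> trm \<Rightarrow> nat" where
  "eval I e (V x s) = e x s"
| "eval I e (Fn f s ts) = fn I f s (map srt_of ts) (map (eval I e) ts)"
| "eval I e (Rd a i) = rd I (eval I e a) (eval I e i)"
| "eval I e (Wr a i u) = wr I (eval I e a) (eval I e i) (eval I e u)"
| "eval I e (CA v) = ca I (eval I e v)"
| "eval I e (K S) = kc I S"

fun holds :: "interp \<Rightarrow> env \<Rightarrow> fml \<Rightarrow> bool" where
  "holds I e Tt = True"
| "holds I e Ff = False"
| "holds I e (Eq s t) = (eval I e s = eval I e t)"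
| "holds I e (Not p) = (\<not> holds I e p)"
| "holds I e (And p q) = (holds I e p \<and> holds I e q)"
| "holds I e (Or p q) = (holds I e p \<or> holds I e q)"
| "holds I e (Imp p q) = (holds I e p \<longrightarrow> holds I e q)"
| "holds I e (Ex x s p) = (\<exists>d\<in>dom I s. holds I (e(x := (e x)(s := d))) p)"
| "holds I e (All x s p) = (\<forall>d\<in>dom I s. holds I (e(x := (e x)(s := d))) p)"

definition models :: "interp \<Rightarrow> fml \<Rightarrow> bool" where
  "models I \<phi> \<longleftrightarrow> (\<forall>e. (\<forall>x s. e x s \<in> dom I s) \<longrightarrow> holds I e \<phi>)"

definition models_set :: "interp \<Rightarrow> fml set \<Rightarrow> bool" where
  "models_set I A \<longleftrightarrow> is_interp I \<and> (\<forall>\<phi>\<in>A. models I \<phi>)"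

definition T :: "fml set \<Rightarrow> trm set" where
  "T A = {t. \<exists>\<phi>\<in>A. t \<in> fterms \<phi> \<and> ground t}"

definition TA :: "fml set \<Rightarrow> trm set" where
  "TA A = {t \<in> T A. srt_of t = Arr}"

text \<open>"a = c in T(A)": the equality atom a = c occurs in A.\<close>
definition atoms :: "fml set \<Rightarrow> (trm \<times> trm) set" where
  "atoms A = (\<Union>\<phi>\<in>A. fatoms \<phi>)"

definition W :: "fml set \<Rightarrow> fml set" where
  "W A = {Eq (Rd (Wr a i u) i) u | a i u. Wr a i u \<in> T A}"

type_synonym pimap = "trm \<Rightarrow> trm \<Rightarrow> (fml \<times> trm) option"

text \<open>Cfg A I pi with I = None standing for I_0 = none; the undefined value () is None.\<close>
datatype config = Unsat | Cfg "fml set" "interp option" pimap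

definition pi0 :: pimap where "pi0 = (\<lambda>a t. None)"

definition init_config :: "fml set \<Rightarrow> config" where
  "init_config A = Cfg A None pi0"

definition sat :: "interp option \<Rightarrow> fml \<Rightarrow> bool" where
  "sat M \<phi> \<longleftrightarrow> (case M of None \<Rightarrow> False | Some I \<Rightarrow> models I \<phi>)"

definition Neq :: "trm \<Rightarrow> trm \<Rightarrow> fml" where
  "Neq s t = Not (Eq s t)"

definition upd :: "pimap \<Rightarrow> trm \<Rightarrow> trm \<Rightarrow> fml \<times> trm \<Rightarrow> pimap" where
  "upd p a t x = p(a := (p a)(t := Some x))"

section \<open>Reasons and updated indices (as terminating unfoldings of their recursions)\<close>

text \<open>Rrel p a t R: the recursive definition of the reason R(a,t) terminates with value R
  (None = the undefined value).\<close>
inductive Rrel :: "pimap \<Rightarrow> trm \<Rightarrow> trm \<Rightarrow> fml option \<Rightarrow> bool" where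
  R_undef: "p a t = None \<Longrightarrow> Rrel p a t None"
| R_top: "p a t \<noteq> None \<Longrightarrow> (t = a \<or> (\<exists>i. t = Rd a i)) \<Longrightarrow> Rrel p a t (Some Tt)"
| R_step: "p a t = Some (r, c) \<Longrightarrow> t \<noteq> a \<Longrightarrow> \<not> (\<exists>i. t = Rd a i) \<Longrightarrow> Rrel p c t R
           \<Longrightarrow> Rrel p a t (map_option (\<lambda>x. And x r) R)"

text \<open>Irel p v a R n: the recursive definition of I(a,<v>) terminates, with value R
  (None = the undefined value, Some S = the set S of index terms) and depth n = |I(a,<v>)|.
  The union of the undefined value with {j} is taken to be undefined.\<close>
inductive Irel :: "pimap \<Rightarrow> trm \<Rightarrow> trm \<Rightarrow> trm set option \<Rightarrow> nat \<Rightarrow> bool" where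
  I_undef: "p a (CA v) = None \<Longrightarrow> Irel p v a None 0"
| I_self: "p a (CA v) \<noteq> None \<Longrightarrow> a = CA v \<Longrightarrow> Irel p v a (Some {}) 1"
| I_wr_up: "p a (CA v) = Some (Tt, b) \<Longrightarrow> a \<noteq> CA v \<Longrightarrow> b = Wr a j u \<Longrightarrow> Irel p v b R n
            \<Longrightarrow> Irel p v a (map_option (insert j) R) (Suc n)"
| I_wr_down: "p a (CA v) = Some (Tt, b) \<Longrightarrow> a \<noteq> CA v \<Longrightarrow> a = Wr b j u \<Longrightarrow> Irel p v b R n
            \<Longrightarrow> Irel p v a (map_option (insert j) R) (Suc n)"
| I_other: "p a (CA v) = Some (r, c) \<Longrightarrow> a \<noteq> CA v
            \<Longrightarrow> \<not> (r = Tt \<and> (\<exists>j u. c = Wr a j u \<or> a = Wr c j u)) \<Longrightarrow> Irel p v c R n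
            \<Longrightarrow> Irel p v a R (Suc n)"

text \<open>I(a,<v>) is well defined: its defining recursion terminates, with a unique value and
  (natural number, hence finite) depth.\<close>
definition I_welldef :: "pimap \<Rightarrow> trm \<Rightarrow> trm \<Rightarrow> bool" where
  "I_welldef p a v \<longleftrightarrow> (\<exists>!x. Irel p v a (fst x) (snd x))"

definition Iset :: "pimap \<Rightarrow> trm \<Rightarrow> trm \<Rightarrow> trm set option" where
  "Iset p a v = (THE R. \<exists>n. Irel p v a R n)"

definition Idepth :: "pimap \<Rightarrow> trm \<Rightarrow> trm \<Rightarrow> nat" where
  "Idepth p a v = (THE n. \<exists>R. Irel p v a R n)"

text \<open>The formula  exists i:sigma. AND_{k in S} i ~= k  for a finite set S of index terms
  (bound variable named ''i''; all k are ground so no capture).\<close>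
definition bigand :: "fml list \<Rightarrow> fml" where
  "bigand xs = foldr And xs Tt"

definition ex_fresh :: "trm set \<Rightarrow> fml" where
  "ex_fresh S = Ex ''i'' Idx (bigand (map (\<lambda>k. Neq (V ''i'' Idx) k)
                 (SOME xs. set xs = S \<and> distinct xs)))"

section \<open>The rules of CAEXT\<close>

datatype rule = Interp | Conf | InitR | InitW | RowD | RowU | EqR | EqL | CongR | DisEq | Roc
  | InitC | CowD | CowU | CEqR | CEqL | CongC

definition conflict_rule :: "rule \<Rightarrow> bool" where
  "conflict_rule r \<longleftrightarrow> r \<in> {CongR, DisEq, Roc, CongC}"

inductive step :: "rule \<Rightarrow> config \<Rightarrow> config \<Rightarrow> bool" where
  s_Interp: "models_set I' (A \<union> W A) \<Longrightarrow> step Interp (Cfg A None p) (Cfg A (Some I') p)"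
| s_Conf: "\<not> (\<exists>I'. models_set I' (A \<union> W A)) \<Longrightarrow> step Conf (Cfg A M p) Unsat"
| s_InitR: "Rd a i \<in> T A \<Longrightarrow> step InitR (Cfg A M p) (Cfg A M (upd p a (Rd a i) (Tt, a)))"
| s_InitW: "s = Wr a i u \<Longrightarrow> s \<in> T A \<Longrightarrow> step InitW (Cfg A M p) (Cfg A M (upd p s (Rd s i) (Tt, s)))"
| s_RowD: "sat M (Neq i j) \<Longrightarrow> p (Wr a j u) (Rd b i) \<noteq> None \<Longrightarrow> p a (Rd b i) = None
           \<Longrightarrow> step RowD (Cfg A M p) (Cfg A M (upd p a (Rd b i) (Neq i j, Wr a j u)))"
| s_RowU: "sat M (Neq i j) \<Longrightarrow> Wr a j u \<in> T A \<Longrightarrow> p a (Rd b i) \<noteq> None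
           \<Longrightarrow> p (Wr a j u) (Rd b i) = None
           \<Longrightarrow> step RowU (Cfg A M p) (Cfg A M (upd p (Wr a j u) (Rd b i) (Neq i j, a)))"
| s_EqR: "sat M (Eq a c) \<Longrightarrow> a \<in> TA A \<Longrightarrow> c \<in> TA A \<Longrightarrow> (a, c) \<in> atoms A
           \<Longrightarrow> p a (Rd b i) \<noteq> None \<Longrightarrow> p c (Rd b i) = None
           \<Longrightarrow> step EqR (Cfg A M p) (Cfg A M (upd p c (Rd b i) (Eq a c, a)))"
| s_EqL: "sat M (Eq a c) \<Longrightarrow> a \<in> TA A \<Longrightarrow> c \<in> TA A \<Longrightarrow> (a, c) \<in> atoms A
           \<Longrightarrow> p c (Rd b i) \<noteq> None \<Longrightarrow> p a (Rd b i) = None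
           \<Longrightarrow> step EqL (Cfg A M p) (Cfg A M (upd p a (Rd b i) (Eq a c, c)))"
| s_CongR: "sat M (Eq i k) \<Longrightarrow> p a (Rd b i) \<noteq> None \<Longrightarrow> p a (Rd c k) \<noteq> None
           \<Longrightarrow> sat M (Neq (Rd b i) (Rd c k))
           \<Longrightarrow> Rrel p a (Rd b i) (Some r1) \<Longrightarrow> Rrel p a (Rd c k) (Some r2)
           \<Longrightarrow> step CongR (Cfg A M p)
                 (Cfg (insert (Imp (And r1 (And r2 (Eq i k))) (Eq (Rd b i) (Rd c k))) A) None pi0)"
| s_DisEq: "sat M (Neq a c) \<Longrightarrow> a \<in> TA A \<Longrightarrow> c \<in> TA A \<Longrightarrow> (a, c) \<in> atoms A
           \<Longrightarrow> K {|a, c|} \<notin> T A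
           \<Longrightarrow> step DisEq (Cfg A M p)
                 (Cfg (insert (Imp (Neq a c) (Neq (Rd a (K {|a, c|})) (Rd c (K {|a, c|})))) A) None pi0)"
| s_Roc: "p (CA v) (Rd b i) \<noteq> None \<Longrightarrow> sat M (Neq (Rd b i) v)
           \<Longrightarrow> Rrel p (CA v) (Rd b i) (Some r)
           \<Longrightarrow> step Roc (Cfg A M p) (Cfg (insert (Imp r (Eq (Rd b i) v)) A) None pi0)"
| s_InitC: "CA v \<in> T A \<Longrightarrow> step InitC (Cfg A M p) (Cfg A M (upd p (CA v) (CA v) (Tt, CA v)))"
| s_CowD: "p (Wr a j u) (CA v) \<noteq> None \<Longrightarrow> p a (CA v) = None
           \<Longrightarrow> Irel p v (Wr a j u) (Some S) n \<Longrightarrow> sat M (ex_fresh (insert j S))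
           \<Longrightarrow> step CowD (Cfg A M p) (Cfg A M (upd p a (CA v) (Tt, Wr a j u)))"
| s_CowU: "p a (CA v) \<noteq> None \<Longrightarrow> p (Wr a j u) (CA v) = None \<Longrightarrow> Wr a j u \<in> T A
           \<Longrightarrow> Irel p v a (Some S) n \<Longrightarrow> sat M (ex_fresh (insert j S))
           \<Longrightarrow> step CowU (Cfg A M p) (Cfg A M (upd p (Wr a j u) (CA v) (Tt, a)))"
| s_CEqR: "sat M (Eq a c) \<Longrightarrow> a \<in> TA A \<Longrightarrow> c \<in> TA A \<Longrightarrow> (a, c) \<in> atoms A
           \<Longrightarrow> p a (CA v) \<noteq> None \<Longrightarrow> p c (CA v) = None
           \<Longrightarrow> step CEqR (Cfg A M p) (Cfg A M (upd p c (CA v) (Eq a c, a)))"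
| s_CEqL: "sat M (Eq a c) \<Longrightarrow> a \<in> TA A \<Longrightarrow> c \<in> TA A \<Longrightarrow> (a, c) \<in> atoms A
           \<Longrightarrow> p c (CA v) \<noteq> None \<Longrightarrow> p a (CA v) = None
           \<Longrightarrow> step CEqL (Cfg A M p) (Cfg A M (upd p a (CA v) (Eq a c, c)))"
| s_CongC: "p a (CA v) \<noteq> None \<Longrightarrow> p a (CA w) \<noteq> None \<Longrightarrow> sat M (Neq v w)
           \<Longrightarrow> Irel p v a (Some S1) n1 \<Longrightarrow> Irel p w a (Some S2) n2
           \<Longrightarrow> sat M (ex_fresh (S1 \<union> S2))
           \<Longrightarrow> Rrel p a (CA v) (Some r1) \<Longrightarrow> Rrel p a (CA w) (Some r2)
           \<Longrightarrow> step CongC (Cfg A M p)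
                 (Cfg (insert (Imp (And r1 (And r2 (ex_fresh (S1 \<union> S2)))) (Eq v w)) A) None pi0)"

definition derivation :: "config list \<Rightarrow> bool" where
  "derivation D \<longleftrightarrow> D \<noteq> [] \<and>
     (\<exists>A. (\<forall>\<phi>\<in>A. input_formula \<phi>) \<and> hd D = init_config A) \<and>
     (\<forall>k. Suc k < length D \<longrightarrow> (\<exists>r. step r (D ! k) (D ! Suc k)))"

end

theory Submission
  imports Defs
begin

text \<open>The recursion defining I(a,<v>) follows the pointers pi(a,<v>) = (r, c) from a to c.
  Non-conflict rules never change an existing entry pi(a,<v>) with a \<noteq> <v> (InitC may re-set
  pi(<v>,<v>), whose content the recursion ignores), and every entry they create either sits at
  a = <v> or points to some c whose entry pi(c,<v>) is already defined. Conflict rules reset pi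
  to pi0. So by induction along the derivation, every defined entry starts a terminating
  recursion with a defined value, and a terminating recursion survives non-conflict steps
  unchanged. Uniqueness holds because at most one clause of the recursion applies: the two
  write clauses would need a = a<j <| u><j' <| u'>.\<close>

lemma Wr_Wr_neq: "a \<noteq> Wr (Wr a j u) j' u'"
proof
  assume "a = Wr (Wr a j u) j' u'"
  then have "size a = size (Wr (Wr a j u) j' u')" by simp
  then show False by simp
qed

lemma Irel_functional:
  assumes "Irel p v a R n" and "Irel p v a R' n'"
  shows "R' = R \<and> n' = n"
  using assms
proof (induction arbitrary: R' n' rule: Irel.induct)
  case (I_undef p a v)
  from I_undef.prems I_undef.hyps show ?case by (cases rule: Irel.cases) simp_all
next
  case (I_self p a v)
  from I_self.prems I_self.hyps show ?case by (cases rule: Irel.cases) simp_all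
next
  case (I_wr_up p a v b j u R n)
  from I_wr_up.prems show ?case
  proof (cases rule: Irel.cases)
    case (I_wr_up b' j' u')
    with I_wr_up.hyps have "b' = b" "j' = j" by simp_all
    with I_wr_up I_wr_up.IH show ?thesis by auto
  next
    case (I_wr_down b' j' u')
    with I_wr_up.hyps show ?thesis using Wr_Wr_neq by simp
  qed (use I_wr_up.hyps in auto)
next
  case (I_wr_down p a v b j u R n)
  from I_wr_down.prems show ?case
  proof (cases rule: Irel.cases)
    case (I_wr_down b' j' u')
    with I_wr_down.hyps have "b' = b" "j' = j" by simp_all
    with I_wr_down I_wr_down.IH show ?thesis by auto
  next
    case (I_wr_up b' j' u')
    with I_wr_down.hyps show ?thesis using Wr_Wr_neq by simp
  qed (use I_wr_down.hyps in auto)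
next
  case (I_other p a v r c R n)
  from I_other.prems show ?case
  proof (cases rule: Irel.cases)
    case (I_other r' c')
    with I_other.hyps have "c' = c" by simp
    with I_other I_other.IH show ?thesis by auto
  qed (use I_other.hyps in auto)
qed

lemma Irel_Iset_Idepth:
  assumes "Irel p v a R n"
  shows "Iset p a v = R" and "Idepth p a v = n"
proof -
  show "Iset p a v = R" unfolding Iset_def
    by (rule the_equality) (use assms Irel_functional in blast)+
  show "Idepth p a v = n" unfolding Idepth_def
    by (rule the_equality) (use assms Irel_functional in blast)+
qed

lemma Irel_Some_if_successor:
  assumes entry: "p a (CA v) = Some (r, c)"
    and succ: "a \<noteq> CA v \<Longrightarrow> Irel p v c (Some S) n"
  shows "\<exists>S' n'. Irel p v a (Some S') n'"
proof (cases "a = CA v")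
  case True
  with entry show ?thesis by (blast intro: I_self)
next
  case False
  note succ = succ[OF False]
  consider (up) j u where "r = Tt" "c = Wr a j u"
    | (down) j u where "r = Tt" "a = Wr c j u"
    | (other) "\<not> (r = Tt \<and> (\<exists>j u. c = Wr a j u \<or> a = Wr c j u))"
    by (cases "r = Tt") auto
  then show ?thesis
  proof cases
    case up
    from I_wr_up[OF entry[unfolded up(1)] False up(2) succ] show ?thesis by auto
  next
    case down
    from I_wr_down[OF entry[unfolded down(1)] False down(2) succ] show ?thesis by auto
  next
    case other
    from I_other[OF entry False other succ] show ?thesis by blast
  qed
qed

definition const_entries_extend :: "pimap \<Rightarrow> pimap \<Rightarrow> bool" where
  "const_entries_extend p p' \<longleftrightarrow> (\<forall>a v. p a (CA v) \<noteq> None \<longrightarrow>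
      p' a (CA v) \<noteq> None \<and> (a \<noteq> CA v \<longrightarrow> p' a (CA v) = p a (CA v)))"

lemma Irel_mono:
  assumes "Irel p v a R n" and "R \<noteq> None" and "const_entries_extend p p'"
  shows "Irel p' v a R n"
  using assms
proof (induction rule: Irel.induct)
  case (I_self p a v)
  then have "p' a (CA v) \<noteq> None" unfolding const_entries_extend_def by blast
  with I_self show ?case by (blast intro: Irel.I_self)
next
  case (I_wr_up p a v b j u R n)
  then have "p' a (CA v) = Some (Tt, b)" unfolding const_entries_extend_def by auto
  with I_wr_up show ?case by (auto intro: Irel.I_wr_up)
next
  case (I_wr_down p a v b j u R n)
  then have "p' a (CA v) = Some (Tt, b)" unfolding const_entries_extend_def by auto
  with I_wr_down show ?case by (auto intro: Irel.I_wr_down)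
next
  case (I_other p a v r c R n)
  then have "p' a (CA v) = Some (r, c)" unfolding const_entries_extend_def by auto
  with I_other show ?case by (auto intro: Irel.I_other)
qed simp

definition I_terminates :: "pimap \<Rightarrow> bool" where
  "I_terminates p \<longleftrightarrow> (\<forall>a v. p a (CA v) \<noteq> None \<longrightarrow> (\<exists>S n. Irel p v a (Some S) n))"

lemma I_terminates_Irel_ex:
  assumes "I_terminates p"
  obtains R n where "Irel p v a R n"
  using assms I_undef unfolding I_terminates_def by blast

lemma I_terminates_I_welldef:
  assumes "I_terminates p"
  shows "I_welldef p a v"
proof -
  obtain R n where "Irel p v a R n" using assms by (rule I_terminates_Irel_ex)
  then show ?thesis
    unfolding I_welldef_def using Irel_functional by (intro ex1I[of _ "(R, n)"]) auto
qed

lemma I_terminates_Iset_None_iff: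
  assumes "I_terminates p"
  shows "Iset p a v = None \<longleftrightarrow> p a (CA v) = None"
proof
  assume "p a (CA v) = None"
  then show "Iset p a v = None" by (blast intro: I_undef Irel_Iset_Idepth)
next
  assume undef: "Iset p a v = None"
  show "p a (CA v) = None"
  proof (rule ccontr)
    assume "p a (CA v) \<noteq> None"
    then obtain S n where "Irel p v a (Some S) n"
      using assms unfolding I_terminates_def by blast
    with undef show False by (simp add: Irel_Iset_Idepth)
  qed
qed

lemma conflict_step_resets:
  assumes "step r (Cfg A M p) (Cfg A' M' p')" and "conflict_rule r"
  shows "p' = pi0"
  using assms by (cases rule: step.cases) (auto simp: conflict_rule_def)

lemma nonconflict_step_extends:
  assumes "step r (Cfg A M p) (Cfg A' M' p')" and "\<not> conflict_rule r"
  shows "const_entries_extend p p'"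
  using assms by (cases rule: step.cases) (auto simp: const_entries_extend_def upd_def conflict_rule_def)

lemma nonconflict_step_new_entry:
  assumes "step r (Cfg A M p) (Cfg A' M' p')" and "\<not> conflict_rule r"
    and "p a (CA v) = None" and "p' a (CA v) = Some (r', c)"
  shows "a = CA v \<or> p c (CA v) \<noteq> None"
  using assms by (cases rule: step.cases) (auto simp: upd_def conflict_rule_def split: if_splits)

lemma step_preserves_I_terminates:
  assumes transition: "step r (Cfg A M p) (Cfg A' M' p')" and terminates: "I_terminates p"
  shows "I_terminates p'"
proof (cases "conflict_rule r")
  case True
  with transition have "p' = pi0" by (rule conflict_step_resets)
  then show ?thesis by (simp add: I_terminates_def pi0_def)
next
  case False
  have ext: "const_entries_extend p p'" using transition False by (rule nonconflict_step_extends)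
  have old: "\<exists>S n. Irel p' v c (Some S) n" if "p c (CA v) \<noteq> None" for c v
    using that terminates ext Irel_mono unfolding I_terminates_def by blast
  show ?thesis unfolding I_terminates_def
  proof (intro allI impI)
    fix a v
    assume "p' a (CA v) \<noteq> None"
    then obtain r' c where entry: "p' a (CA v) = Some (r', c)" by auto
    show "\<exists>S n. Irel p' v a (Some S) n"
    proof (cases "p a (CA v) = None")
      case True
      with transition False have "a = CA v \<or> p c (CA v) \<noteq> None"
        using entry by (rule nonconflict_step_new_entry)
      with entry old show ?thesis by (metis Irel_Some_if_successor)
    next
      case False
      then show ?thesis by (rule old)
    qed
  qed
qed

lemma derivation_I_terminates:
  assumes "derivation D" and "k < length D" and "D ! k = Cfg A M p"
  shows "I_terminates p"
  using assms(2,3)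
proof (induction k arbitrary: A M p)
  case 0
  from \<open>derivation D\<close> obtain A0 where "hd D = init_config A0"
    unfolding derivation_def by blast
  with 0 have "p = pi0" by (simp add: hd_conv_nth init_config_def)
  then show ?case by (simp add: I_terminates_def pi0_def)
next
  case (Suc k)
  from \<open>derivation D\<close> Suc.prems obtain r where transition: "step r (D ! k) (D ! Suc k)"
    unfolding derivation_def by blast
  then obtain A0 M0 p0 where "D ! k = Cfg A0 M0 p0"
    by (cases "D ! k") (auto elim: step.cases)
  with Suc transition show ?case by (metis Suc_lessD step_preserves_I_terminates)
qed

lemma nonconflict_step_keeps_Iset_Idepth:
  assumes "step r (Cfg A' M' p') (Cfg A M p)" and "\<not> conflict_rule r"
    and "I_terminates p'" and "Iset p' a v \<noteq> None"
  shows "Iset p a v = Iset p' a v \<and> Idepth p a v = Idepth p' a v"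
proof -
  obtain R n where rel: "Irel p' v a R n" using assms(3) by (rule I_terminates_Irel_ex)
  with assms(4) have "R \<noteq> None" by (simp add: Irel_Iset_Idepth)
  with rel assms(1,2) have "Irel p v a R n" by (blast intro: Irel_mono nonconflict_step_extends)
  with rel show ?thesis by (simp add: Irel_Iset_Idepth)
qed

theorem mainTheorem5:
  assumes "derivation D"
    and "last D = Cfg A M p"
  shows "\<forall>a v. ws a \<and> srt_of a = Arr \<and> ws (CA v) \<longrightarrow>
           (\<forall>A' M' p' r. 2 \<le> length D \<longrightarrow> D ! (length D - 2) = Cfg A' M' p'
               \<longrightarrow> step r (Cfg A' M' p') (Cfg A M p) \<longrightarrow> \<not> conflict_rule r
               \<longrightarrow> Iset p' a v \<noteq> None
               \<longrightarrow> Iset p a v = Iset p' a v \<and> Idepth p a v = Idepth p' a v)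
         \<and> I_welldef p a v
         \<and> (Iset p a v = None \<longleftrightarrow> p a (CA v) = None)"
proof -
  have "D \<noteq> []" using assms(1) unfolding derivation_def by blast
  with assms have "I_terminates p"
    by (metis derivation_I_terminates diff_less last_conv_nth length_greater_0_conv zero_less_one)
  moreover have "I_terminates p'"
    if "2 \<le> length D" and "D ! (length D - 2) = Cfg A' M' p'" for A' M' p'
    using derivation_I_terminates[OF assms(1) _ that(2)] that(1) by simp
  ultimately show ?thesis
    by (simp add: I_terminates_I_welldef I_terminates_Iset_None_iff
        nonconflict_step_keeps_Iset_Idepth)
qed

end
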